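(* Let $\Delta$ be a local derivation of $\mathcal{S}$ with $\Delta(L_0)=\Delta(L_1)=0$. Then $\Delta(L_m)=0$ for all $m\in\mathbb{Z}$.
   Context: $\mathcal{S}$ is the centerless super Virasoro algebra: the Lie superalgebra over $\mathbb{C}$ with basis $\{L_m,G_n: m,n\in\mathbb{Z}\}$, $L_m$ even, $G_n$ odd, and brackets $[L_m,L_n]=(m-n)L_{m+n}$, $[L_m,G_r]=(\frac m2-r)G_{m+r}$, $[G_r,G_s]=2L_{r+s}$. A homogeneous linear map $D$ of parity $|D|$ is a derivation if $D([x,y])=[D(x),y]+(-1)^{|D||x|}[x,D(y)]$ for homogeneous $x,y$; derivations are sums of even and odd ones. A linear map $\Delta:\mathcal{S}\to\mathcal{S}$ is a local derivation if for every $x$ there is a derivation $D_x$ with $\Delta(x)=D_x(x)$. *)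

theory Defs
  imports Complex_Main
begin

text \<open>Elements of the centerless super Virasoro algebra S are encoded as pairs
  (a, b) of finitely supported coefficient functions: the element
  sum_m a m L_m + sum_r b r G_r.\<close>

type_synonym sv = "(int \<Rightarrow> complex) \<times> (int \<Rightarrow> complex)"

definition fin_supp :: "(int \<Rightarrow> complex) \<Rightarrow> bool" where
  "fin_supp f \<longleftrightarrow> finite {n. f n \<noteq> 0}"

definition SV :: "sv set" where
  "SV = {x. fin_supp (fst x) \<and> fin_supp (snd x)}"

definition sv_zero :: sv where
  "sv_zero = (\<lambda>_. 0, \<lambda>_. 0)"

definition sv_add :: "sv \<Rightarrow> sv \<Rightarrow> sv" where
  "sv_add x y = (\<lambda>n. fst x n + fst y n, \<lambda>n. snd x n + snd y n)"

definition sv_smul :: "complex \<Rightarrow> sv \<Rightarrow> sv" where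
  "sv_smul c x = (\<lambda>n. c * fst x n, \<lambda>n. c * snd x n)"

definition Lb :: "int \<Rightarrow> sv" where
  "Lb m = (\<lambda>n. if n = m then 1 else 0, \<lambda>_. 0)"

definition Gb :: "int \<Rightarrow> sv" where
  "Gb r = (\<lambda>_. 0, \<lambda>n. if n = r then 1 else 0)"

text \<open>The super bracket, the bilinear extension of
  [L_m,L_n]=(m-n)L_{m+n}, [L_m,G_r]=(m/2-r)G_{m+r}, [G_r,L_m]=-(m/2-r)G_{m+r},
  [G_r,G_s]=2L_{r+s}.\<close>
definition sv_br :: "sv \<Rightarrow> sv \<Rightarrow> sv" where
  "sv_br x y =
    (\<lambda>k. (\<Sum>m\<in>{m. fst x m \<noteq> 0}. of_int (m - (k - m)) * fst x m * fst y (k - m))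
        + (\<Sum>r\<in>{r. snd x r \<noteq> 0}. 2 * snd x r * snd y (k - r)),
     \<lambda>k. (\<Sum>m\<in>{m. fst x m \<noteq> 0}. (of_int m / 2 - of_int (k - m)) * fst x m * snd y (k - m))
        - (\<Sum>m\<in>{m. fst y m \<noteq> 0}. (of_int m / 2 - of_int (k - m)) * fst y m * snd x (k - m)))"

text \<open>Homogeneous elements: parity False = even (span of the L_m),
  parity True = odd (span of the G_r).\<close>
definition sv_hom :: "bool \<Rightarrow> sv \<Rightarrow> bool" where
  "sv_hom p x \<longleftrightarrow> x \<in> SV \<and> (if p then fst x = (\<lambda>_. 0) else snd x = (\<lambda>_. 0))"

definition sv_linear :: "(sv \<Rightarrow> sv) \<Rightarrow> bool" where
  "sv_linear D \<longleftrightarrow> (\<forall>x\<in>SV. D x \<in> SV)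
     \<and> (\<forall>x\<in>SV. \<forall>y\<in>SV. D (sv_add x y) = sv_add (D x) (D y))
     \<and> (\<forall>c. \<forall>x\<in>SV. D (sv_smul c x) = sv_smul c (D x))"

definition hom_derivation :: "bool \<Rightarrow> (sv \<Rightarrow> sv) \<Rightarrow> bool" where
  "hom_derivation p D \<longleftrightarrow> sv_linear D
     \<and> (\<forall>q x. sv_hom q x \<longrightarrow> sv_hom (p \<noteq> q) (D x))
     \<and> (\<forall>q x y. sv_hom q x \<longrightarrow> y \<in> SV \<longrightarrow>
          D (sv_br x y) = sv_add (sv_br (D x) y)
                                 (sv_smul (if p \<and> q then -1 else 1) (sv_br x (D y))))"

definition derivation :: "(sv \<Rightarrow> sv) \<Rightarrow> bool" where
  "derivation D \<longleftrightarrow> (\<exists>D0 D1. hom_derivation False D0 \<and> hom_derivation True D1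
     \<and> (\<forall>x\<in>SV. D x = sv_add (D0 x) (D1 x)))"

definition local_derivation :: "(sv \<Rightarrow> sv) \<Rightarrow> bool" where
  "local_derivation \<Delta> \<longleftrightarrow> sv_linear \<Delta>
     \<and> (\<forall>x\<in>SV. \<exists>D. derivation D \<and> \<Delta> x = D x)"

end

theory Submission
  imports Defs "HOL-Computational_Algebra.Polynomial"
begin

text \<open>On the \<open>L\<^sub>j\<close> every derivation \<open>D\<close> of \<open>\<S>\<close> agrees with an inner one: there is
  \<open>u \<in> \<S>\<close> with \<open>D L\<^sub>j = [u, L\<^sub>j]\<close> for all \<open>j\<close>. Reading coefficient sequences as Laurent
  polynomials, \<open>[u, L\<^sub>j]\<close> evaluated at \<open>z \<noteq> 0\<close> is \<open>z\<^sup>j(A + j B)\<close> with \<open>A, B\<close> independent of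
  \<open>j\<close>; so if \<open>l\<^sub>0 + l\<^sub>1 t + t\<^sup>m\<close> has a double root at \<open>z\<close>, then
  \<open>D (l\<^sub>0 L\<^sub>0 + l\<^sub>1 L\<^sub>1 + L\<^sub>m)\<close> evaluates to \<open>0\<close> at \<open>z\<close>. Since \<open>\<Delta> L\<^sub>0 = \<Delta> L\<^sub>1 = 0\<close>, the
  element \<open>\<Delta> L\<^sub>m\<close> equals \<open>\<Delta> (l\<^sub>0 L\<^sub>0 + l\<^sub>1 L\<^sub>1 + L\<^sub>m)\<close>, which is the value of some derivation;
  hence the Laurent polynomials of \<open>\<Delta> L\<^sub>m\<close> vanish on \<open>\<complex> - {0}\<close>, and \<open>\<Delta> L\<^sub>m = 0\<close>.\<close>

lemma fin_supp_add: "fin_supp f \<Longrightarrow> fin_supp g \<Longrightarrow> fin_supp (\<lambda>k. f k + g k)"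
  unfolding fin_supp_def by (rule finite_subset[of _ "{k. f k \<noteq> 0} \<union> {k. g k \<noteq> 0}"]) auto

lemma fin_supp_mult: "fin_supp f \<Longrightarrow> fin_supp (\<lambda>k. c k * f k)"
  unfolding fin_supp_def by (rule finite_subset[of _ "{k. f k \<noteq> 0}"]) auto

lemma fin_supp_shift: "fin_supp f \<Longrightarrow> fin_supp (\<lambda>k. f (k - j))"
proof -
  assume "fin_supp f"
  moreover have "{k. f (k - j) \<noteq> 0} = (\<lambda>i. i + j) ` {i. f i \<noteq> 0}"
    by (auto simp: image_iff) (metis diff_add_cancel)
  ultimately show ?thesis unfolding fin_supp_def by simp
qed

lemma Lb_in_SV: "Lb m \<in> SV"
  unfolding SV_def fin_supp_def Lb_def by auto

lemma sv_add_in_SV: "x \<in> SV \<Longrightarrow> y \<in> SV \<Longrightarrow> sv_add x y \<in> SV"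
  unfolding SV_def sv_add_def by (auto intro: fin_supp_add)

lemma sv_smul_in_SV: "x \<in> SV \<Longrightarrow> sv_smul c x \<in> SV"
  unfolding SV_def sv_smul_def by (auto intro: fin_supp_mult)

lemma sv_br_Lb_left:
  "fst (sv_br (Lb n) u) k = (2 * of_int n - of_int k) * fst u (k - n)"
  "snd (sv_br (Lb n) u) k = (3/2 * of_int n - of_int k) * snd u (k - n)"
proof -
  have "{j. fst (Lb n) j \<noteq> 0} = {n}" "{j. snd (Lb n) j \<noteq> 0} = {}"
    by (auto simp: Lb_def)
  then show "fst (sv_br (Lb n) u) k = (2 * of_int n - of_int k) * fst u (k - n)"
    "snd (sv_br (Lb n) u) k = (3/2 * of_int n - of_int k) * snd u (k - n)"
    unfolding sv_br_def by (auto simp: Lb_def algebra_simps)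
qed

lemma sv_br_Lb_right:
  assumes "u \<in> SV"
  shows "fst (sv_br u (Lb m)) k = (of_int k - 2 * of_int m) * fst u (k - m)"
    and "snd (sv_br u (Lb m)) k = (of_int k - 3/2 * of_int m) * snd u (k - m)"
proof -
  have "finite {j. fst u j \<noteq> 0}" using assms by (simp add: SV_def fin_supp_def)
  then have "(\<Sum>j | fst u j \<noteq> 0. of_int (j - (k - j)) * fst u j * fst (Lb m) (k - j))
      = (\<Sum>j | fst u j \<noteq> 0. if j = k - m then of_int (j - (k - j)) * fst u j else 0)"
    by (intro sum.cong) (auto simp: Lb_def)
  also have "\<dots> = (of_int k - 2 * of_int m) * fst u (k - m)"
    unfolding sum.delta[OF \<open>finite {j. fst u j \<noteq> 0}\<close>] by (simp add: algebra_simps)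
  finally show "fst (sv_br u (Lb m)) k = (of_int k - 2 * of_int m) * fst u (k - m)"
    unfolding sv_br_def by (simp add: Lb_def)
  have "{j. fst (Lb m) j \<noteq> 0} = {m}" by (auto simp: Lb_def)
  then show "snd (sv_br u (Lb m)) k = (of_int k - 3/2 * of_int m) * snd u (k - m)"
    unfolding sv_br_def by (simp add: Lb_def algebra_simps)
qed

lemma sv_br_Lb_Lb: "sv_br (Lb n) (Lb m) = sv_smul (of_int (n - m)) (Lb (n + m))"
  by (simp add: prod_eq_iff fun_eq_iff sv_br_Lb_left) (simp add: sv_smul_def Lb_def)

lemma sv_br_add_Lb:
  assumes "u \<in> SV" "v \<in> SV"
  shows "sv_br (sv_add u v) (Lb m) = sv_add (sv_br u (Lb m)) (sv_br v (Lb m))"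
  using sv_br_Lb_right[OF sv_add_in_SV[OF assms]] sv_br_Lb_right[OF assms(1)] sv_br_Lb_right[OF assms(2)]
  by (simp add: prod_eq_iff fun_eq_iff sv_add_def distrib_left)

lemma sv_br_Lb_add: "sv_br (Lb n) (sv_add u v) = sv_add (sv_br (Lb n) u) (sv_br (Lb n) v)"
  by (simp add: prod_eq_iff fun_eq_iff sv_br_Lb_left sv_add_def algebra_simps)

lemma hom_derivation_Lb_bracket:
  assumes "hom_derivation p D"
  shows "sv_smul (of_int (n - m)) (D (Lb (n + m)))
    = sv_add (sv_br (D (Lb n)) (Lb m)) (sv_br (Lb n) (D (Lb m)))"
proof -
  have lin: "sv_linear D"
    and leibniz: "\<And>q x y. sv_hom q x \<Longrightarrow> y \<in> SV \<Longrightarrow>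
      D (sv_br x y) = sv_add (sv_br (D x) y) (sv_smul (if p \<and> q then -1 else 1) (sv_br x (D y)))"
    using assms unfolding hom_derivation_def by blast+
  have "sv_hom False (Lb n)" by (simp add: sv_hom_def Lb_in_SV) (simp add: Lb_def)
  from leibniz[OF this Lb_in_SV] have "D (sv_br (Lb n) (Lb m))
      = sv_add (sv_br (D (Lb n)) (Lb m)) (sv_br (Lb n) (D (Lb m)))"
    by (simp add: sv_smul_def)
  moreover have "D (sv_br (Lb n) (Lb m)) = sv_smul (of_int (n - m)) (D (Lb (n + m)))"
    using lin Lb_in_SV unfolding sv_br_Lb_Lb sv_linear_def by blast
  ultimately show ?thesis by simp
qed

lemma derivation_linear: "derivation D \<Longrightarrow> sv_linear D"
  unfolding derivation_def hom_derivation_def sv_linear_def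
  by (auto simp: sv_add_in_SV sv_smul_in_SV) (auto simp: sv_add_def sv_smul_def algebra_simps)

lemma derivation_Lb_bracket:
  assumes "derivation D"
  shows "sv_smul (of_int (n - m)) (D (Lb (n + m)))
    = sv_add (sv_br (D (Lb n)) (Lb m)) (sv_br (Lb n) (D (Lb m)))"
proof -
  obtain D0 D1 where D0: "hom_derivation False D0" and D1: "hom_derivation True D1"
    and D: "\<And>j. D (Lb j) = sv_add (D0 (Lb j)) (D1 (Lb j))"
    using assms Lb_in_SV unfolding derivation_def by blast
  have "D0 (Lb n) \<in> SV" "D1 (Lb n) \<in> SV"
    using D0 D1 unfolding hom_derivation_def sv_linear_def by (simp_all add: Lb_in_SV)
  then have "sv_br (D (Lb n)) (Lb m) = sv_add (sv_br (D0 (Lb n)) (Lb m)) (sv_br (D1 (Lb n)) (Lb m))"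
    unfolding D by (rule sv_br_add_Lb)
  then show ?thesis
    using hom_derivation_Lb_bracket[OF D0, of n m] hom_derivation_Lb_bracket[OF D1, of n m]
    unfolding D sv_br_Lb_add
    by (simp add: prod_eq_iff fun_eq_iff sv_add_def sv_smul_def algebra_simps)
qed

text \<open>\<open>witt_derivation b X\<close> says that \<open>L\<^sub>j \<mapsto> \<Sum>\<^sub>k X j k e\<^sub>k\<close> is a derivation of the Witt
  algebra into the module with basis \<open>e\<^sub>k\<close> on which \<open>L\<^sub>n e\<^sub>i = ((b - 1) n - i) e\<^sub>n\<^sub>+\<^sub>i\<close>.
  For \<open>b = 2\<close> this module is the even part of \<open>\<S>\<close>, for \<open>b = 3/2\<close> the odd part.\<close>

definition witt_derivation :: "complex \<Rightarrow> (int \<Rightarrow> int \<Rightarrow> complex) \<Rightarrow> bool" where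
  "witt_derivation b X \<longleftrightarrow> (\<forall>n m k. of_int (n - m) * X (n + m) k
     = (of_int k - b * of_int m) * X n (k - m) + (b * of_int n - of_int k) * X m (k - n))"

lemma derivation_witt_derivation:
  assumes "derivation D"
  shows "witt_derivation 2 (\<lambda>j. fst (D (Lb j)))"
    and "witt_derivation (3/2) (\<lambda>j. snd (D (Lb j)))"
proof -
  have SV: "D (Lb j) \<in> SV" for j
    using derivation_linear[OF assms] Lb_in_SV unfolding sv_linear_def by blast
  have "fst (sv_smul (of_int (n - m)) (D (Lb (n + m)))) k
      = fst (sv_add (sv_br (D (Lb n)) (Lb m)) (sv_br (Lb n) (D (Lb m)))) k"
    "snd (sv_smul (of_int (n - m)) (D (Lb (n + m)))) k
      = snd (sv_add (sv_br (D (Lb n)) (Lb m)) (sv_br (Lb n) (D (Lb m)))) k" for n m k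
    using derivation_Lb_bracket[OF assms, of n m] by simp_all
  then show "witt_derivation 2 (\<lambda>j. fst (D (Lb j)))"
    and "witt_derivation (3/2) (\<lambda>j. snd (D (Lb j)))"
    unfolding witt_derivation_def
    by (simp_all add: sv_smul_def sv_add_def sv_br_Lb_left sv_br_Lb_right[OF SV])
qed

lemma diagonal_equation_linear:
  fixes h :: "int \<Rightarrow> complex" and a :: complex
  assumes a: "a \<notin> {0, -1, -2}"
    and R: "\<And>n m. n \<noteq> m \<Longrightarrow>
      of_int (n - m) * h (n + m) = (of_int n - a * of_int m) * h n + (a * of_int n - of_int m) * h m"
  shows "h j = of_int j * h 1"
proof -
  have "a * h 0 = 0" using R[of 0 1] by simp
  then have h0: "h 0 = 0" using a by simp
  have h_neg: "h (- k) = - h k" for k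
  proof (cases "k = 0")
    case False
    then have "of_int k * (1 + a) * (h k + h (- k)) = 0"
      using R[of k "- k"] h0 by (simp add: algebra_simps)
    with False a show ?thesis by (simp add: add_eq_0_iff2 add_eq_0_iff) (metis minus_minus)
  qed (simp add: h0)
  have up: "(1 - of_int k) * h (k + 1) = (1 - a * of_int k) * h 1 + (a - of_int k) * h k"
    if "k \<noteq> 1" for k
    using R[of 1 k] that by (simp add: add.commute)
  \<comment> \<open>eliminate \<open>h 3\<close>, \<open>h 4\<close>, \<open>h 5\<close>\<close>
  have "a * (a + 1) * (a + 2) * (h 2 - 2 * h 1) = 0"
    using up[of 2] up[of 3] up[of 4] R[of 3 2] by simp algebra
  then have h2: "h 2 = 2 * h 1" using a by (simp add: add_eq_0_iff2)
  have h_nat: "h (int k) = of_nat k * h 1" for k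
  proof (induction k)
    case (Suc k)
    show ?case
    proof (cases "k = 1")
      case False
      then have "(1 - of_int (int k)) * h (int k + 1) = (1 - of_int (int k)) * ((of_nat k + 1) * h 1)"
        using up[of k] Suc.IH by (simp add: algebra_simps)
      moreover have "(1 - of_int (int k)) \<noteq> (0::complex)" using False by simp
      ultimately show ?thesis by (simp add: add.commute)
    qed (simp add: h2)
  qed (simp add: h0)
  show ?thesis
    using h_nat[of "nat j"] h_nat[of "nat (- j)"] h_neg[of "- j"] by (cases "j \<ge> 0") simp_all
qed

text \<open>Such a derivation is inner: \<open>X j = - L\<^sub>j u\<close> for \<open>u = \<Sum>\<^sub>i y i e\<^sub>i\<close>.\<close>

lemma witt_derivation_inner:
  assumes X: "witt_derivation b X" and b: "b \<notin> {-1, 0, 1}" and fin: "fin_supp (X 0)"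
  obtains y where "fin_supp y" and "\<And>j k. X j k = (of_int k - b * of_int j) * y (k - j)"
proof
  define y where "y i = (if i = 0 then X 1 1 / (1 - b) else X 0 i / of_int i)" for i
  have rec: "of_int (n - m) * X (n + m) k
      = (of_int k - b * of_int m) * X n (k - m) + (b * of_int n - of_int k) * X m (k - n)" for n m k
    using X unfolding witt_derivation_def by blast
  have diag: "X j j = of_int j * X 1 1" for j
  proof (rule diagonal_equation_linear[where a = "b - 1"])
    show "b - 1 \<notin> {0, - 1, - 2}" using b by (auto simp: eq_neg_iff_add_eq_0 add.commute)
    show "of_int (n - m) * X (n + m) (n + m)
      = (of_int n - (b - 1) * of_int m) * X n n + ((b - 1) * of_int n - of_int m) * X m m" for n m
      using rec[of n m "n + m"] by (simp add: algebra_simps)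
  qed
  have "{i. y i \<noteq> 0} \<subseteq> insert 0 {i. X 0 i \<noteq> 0}" unfolding y_def by auto
  then show "fin_supp y" using fin unfolding fin_supp_def by (auto intro: finite_subset)
  show "X j k = (of_int k - b * of_int j) * y (k - j)" for j k
  proof (cases "k = j")
    case True
    have "1 - b \<noteq> 0" using b by auto
    with True diag[of j] show ?thesis by (simp add: y_def field_simps)
  next
    case False
    then have "of_int (k - j) \<noteq> (0::complex)" by simp
    moreover have "of_int (k - j) * X j k = (of_int k - b * of_int j) * X 0 (k - j)"
      using rec[of 0 j k] by (simp add: algebra_simps)
    ultimately show ?thesis using False by (simp add: y_def field_simps)
  qed
qed

definition laurent :: "(int \<Rightarrow> complex) \<Rightarrow> complex \<Rightarrow> complex" where
  "laurent f z = (\<Sum>k | f k \<noteq> 0. f k * z powi k)"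

lemma laurent_eq_sum:
  assumes "finite S" "{k. f k \<noteq> 0} \<subseteq> S"
  shows "laurent f z = (\<Sum>k\<in>S. f k * z powi k)"
  unfolding laurent_def using assms by (intro sum.mono_neutral_left) auto

lemma laurent_add:
  assumes "fin_supp f" "fin_supp g"
  shows "laurent (\<lambda>k. f k + g k) z = laurent f z + laurent g z"
proof -
  let ?S = "{k. f k \<noteq> 0} \<union> {k. g k \<noteq> 0}"
  have fin: "finite ?S" using assms by (simp add: fin_supp_def)
  have "laurent (\<lambda>k. f k + g k) z = (\<Sum>k\<in>?S. (f k + g k) * z powi k)"
    using fin by (rule laurent_eq_sum) auto
  also have "\<dots> = (\<Sum>k\<in>?S. f k * z powi k) + (\<Sum>k\<in>?S. g k * z powi k)"
    unfolding distrib_right by (rule sum.distrib)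
  also have "\<dots> = laurent f z + laurent g z"
    using laurent_eq_sum[OF fin Un_upper1] laurent_eq_sum[OF fin Un_upper2] by (simp only:)
  finally show ?thesis .
qed

lemma laurent_mult_const:
  assumes "fin_supp f"
  shows "laurent (\<lambda>k. c * f k) z = c * laurent f z"
proof -
  have "finite {k. f k \<noteq> 0}" using assms by (simp add: fin_supp_def)
  then have "laurent (\<lambda>k. c * f k) z = (\<Sum>k | f k \<noteq> 0. c * f k * z powi k)"
    by (rule laurent_eq_sum) auto
  then show ?thesis by (simp add: laurent_def sum_distrib_left mult.assoc)
qed

lemma laurent_shift:
  assumes "fin_supp f" "z \<noteq> 0"
  shows "laurent (\<lambda>k. f (k - j)) z = z powi j * laurent f z"
proof -
  let ?S = "{k. f k \<noteq> 0}"
  have fin: "finite ?S" using assms(1) by (simp add: fin_supp_def)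
  have "laurent (\<lambda>k. f (k - j)) z = (\<Sum>k\<in>(\<lambda>i. i + j) ` ?S. f (k - j) * z powi k)"
    using fin by (intro laurent_eq_sum) (auto simp: image_iff, metis diff_add_cancel)
  also have "\<dots> = (\<Sum>i\<in>?S. f i * z powi (i + j))"
    by (subst sum.reindex) (auto simp: inj_on_def)
  also have "\<dots> = z powi j * laurent f z"
    unfolding laurent_def sum_distrib_left
    by (rule sum.cong) (simp_all add: power_int_add assms(2))
  finally show ?thesis .
qed

lemma laurent_eq_0_imp_zero:
  assumes f: "fin_supp f" and vanish: "\<And>z. z \<noteq> 0 \<Longrightarrow> laurent f z = 0"
  shows "f k = 0"
proof (rule ccontr)
  assume fk: "f k \<noteq> 0"
  define S where "S = {k. f k \<noteq> 0}"
  have fin: "finite S" using f by (simp add: S_def fin_supp_def)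
  define M where "M = Max (insert 0 (abs ` S))"
  have shift_nonneg: "0 \<le> i + M" if "i \<in> S" for i
  proof -
    have "\<bar>i\<bar> \<le> M" unfolding M_def using fin that by (intro Max_ge) auto
    then show ?thesis by arith
  qed
  define p where "p = (\<Sum>i\<in>S. monom (f i) (nat (i + M)))"
  have p_root: "poly p z = 0" if "z \<noteq> 0" for z
  proof -
    have "poly p z = (\<Sum>i\<in>S. z powi M * (f i * z powi i))"
      unfolding p_def poly_sum poly_monom
    proof (rule sum.cong)
      fix i assume "i \<in> S"
      then have "z ^ nat (i + M) = z powi (i + M)"
        using shift_nonneg by (simp add: power_int_def)
      then show "f i * z ^ nat (i + M) = z powi M * (f i * z powi i)"
        using that by (simp add: power_int_add)
    qed simp
    also have "\<dots> = z powi M * laurent f z"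
      by (simp add: laurent_def S_def sum_distrib_left)
    finally show ?thesis using vanish[OF that] by simp
  qed
  have "poly (pCons 0 p) z = 0" for z
    using p_root[of z]
    by (cases "z = 0") (simp_all only: poly_pCons mult_zero_left mult_zero_right add_0 simp_thms)
  then have "p = 0" using poly_all_0_iff_0 pCons_eq_0_iff by blast
  moreover have "coeff p (nat (k + M)) = f k"
  proof -
    have "k \<in> S" using fk by (simp add: S_def)
    have "coeff p (nat (k + M)) = (\<Sum>i\<in>S. if i = k then f i else 0)"
      unfolding p_def coeff_sum coeff_monom
      using shift_nonneg \<open>k \<in> S\<close> by (intro sum.cong) (auto simp: nat_eq_iff2)
    also have "\<dots> = f k" using fin \<open>k \<in> S\<close> by simp
    finally show ?thesis .
  qed
  ultimately show False using fk by simp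
qed

text \<open>Each \<open>X j\<close> evaluates to \<open>z\<^sup>j (Y\<^sub>1 + (1 - b) j Y\<^sub>0)\<close>, so the combination evaluates to
  \<open>Y\<^sub>1 p(z) + (1 - b) Y\<^sub>0 z p'(z)\<close> for \<open>p(t) = l\<^sub>0 + l\<^sub>1 t + t\<^sup>m\<close>.\<close>

lemma laurent_double_root_combination:
  assumes y: "fin_supp y" and z: "z \<noteq> 0"
    and X: "\<And>j k. X j k = (of_int k - b * of_int j) * y (k - j)"
    and root: "l0 + l1 * z + z powi m = 0"
    and double_root: "l1 * z + of_int m * z powi m = 0"
  shows "laurent (\<lambda>k. l0 * X 0 k + l1 * X 1 k + X m k) z = 0"
proof -
  define Y0 where "Y0 = laurent y z"
  define Y1 where "Y1 = laurent (\<lambda>i. of_int i * y i) z"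
  have y1: "fin_supp (\<lambda>i. of_int i * y i)" using y by (rule fin_supp_mult)
  have X_fin: "fin_supp (X j)" for j
    unfolding X[abs_def] by (intro fin_supp_mult fin_supp_shift y)
  have X_laurent: "laurent (X j) z = z powi j * (Y1 + (1 - b) * of_int j * Y0)" for j
  proof -
    have "X j = (\<lambda>k. of_int (k - j) * y (k - j) + (1 - b) * of_int j * y (k - j))"
      by (simp add: X fun_eq_iff algebra_simps)
    then have "laurent (X j) z = laurent (\<lambda>k. of_int (k - j) * y (k - j)) z
        + laurent (\<lambda>k. (1 - b) * of_int j * y (k - j)) z"
      using laurent_add[OF fin_supp_shift[OF y1] fin_supp_mult[OF fin_supp_shift[OF y]]] by simp
    also have "\<dots> = z powi j * Y1 + (1 - b) * of_int j * (z powi j * Y0)"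
      unfolding laurent_shift[OF y1 z] laurent_mult_const[OF fin_supp_shift[OF y]]
        laurent_shift[OF y z] Y0_def Y1_def ..
    finally show ?thesis by (simp add: algebra_simps)
  qed
  have "laurent (\<lambda>k. l0 * X 0 k + l1 * X 1 k + X m k) z
      = l0 * laurent (X 0) z + l1 * laurent (X 1) z + laurent (X m) z"
    using X_fin by (simp add: laurent_add laurent_mult_const fin_supp_add fin_supp_mult)
  also have "\<dots> = Y1 * (l0 + l1 * z + z powi m) + (1 - b) * Y0 * (l1 * z + of_int m * z powi m)"
    unfolding X_laurent by (simp add: algebra_simps)
  also have "\<dots> = 0" by (simp add: root double_root)
  finally show ?thesis .
qed

definition double_root_element :: "int \<Rightarrow> complex \<Rightarrow> sv" where
  "double_root_element m z = sv_add (sv_smul ((of_int m - 1) * z powi m) (Lb 0))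
     (sv_add (sv_smul (- of_int m * z powi (m - 1)) (Lb 1)) (Lb m))"

lemma double_root_element_in_SV: "double_root_element m z \<in> SV"
  unfolding double_root_element_def by (intro sv_add_in_SV sv_smul_in_SV Lb_in_SV)

lemma sv_linear_double_root_element:
  assumes "sv_linear D"
  shows "D (double_root_element m z) = sv_add (sv_smul ((of_int m - 1) * z powi m) (D (Lb 0)))
     (sv_add (sv_smul (- of_int m * z powi (m - 1)) (D (Lb 1))) (D (Lb m)))"
  using assms unfolding double_root_element_def sv_linear_def
  by (simp add: sv_add_in_SV sv_smul_in_SV Lb_in_SV)

lemma derivation_double_root_element:
  assumes D: "derivation D" and z: "z \<noteq> 0"
  shows "laurent (fst (D (double_root_element m z))) z = 0"
    and "laurent (snd (D (double_root_element m z))) z = 0"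
proof -
  have lin: "sv_linear D" using D by (rule derivation_linear)
  have "D (Lb 0) \<in> SV" using lin Lb_in_SV unfolding sv_linear_def by blast
  then have fin: "fin_supp (fst (D (Lb 0)))" "fin_supp (snd (D (Lb 0)))"
    by (simp_all add: SV_def)
  have "z powi (m - 1) * z = z powi m" using z by (simp add: power_int_diff)
  then have root: "(of_int m - 1) * z powi m + - of_int m * z powi (m - 1) * z + z powi m = 0"
    and double_root: "- of_int m * z powi (m - 1) * z + of_int m * z powi m = 0"
    by (simp_all add: algebra_simps)
  obtain y where y: "fin_supp y" "\<And>j k. fst (D (Lb j)) k = (of_int k - 2 * of_int j) * y (k - j)"
    using witt_derivation_inner[OF derivation_witt_derivation(1)[OF D] _ fin(1)] by auto
  from laurent_double_root_combination[OF y(1) z y(2) root double_root]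
  show "laurent (fst (D (double_root_element m z))) z = 0"
    unfolding sv_linear_double_root_element[OF lin] by (simp add: sv_add_def sv_smul_def algebra_simps)
  obtain w where w: "fin_supp w" "\<And>j k. snd (D (Lb j)) k = (of_int k - 3/2 * of_int j) * w (k - j)"
    using witt_derivation_inner[OF derivation_witt_derivation(2)[OF D] _ fin(2)] by auto
  from laurent_double_root_combination[OF w(1) z w(2) root double_root]
  show "laurent (snd (D (double_root_element m z))) z = 0"
    unfolding sv_linear_double_root_element[OF lin] by (simp add: sv_add_def sv_smul_def algebra_simps)
qed

theorem lemma3p3:
  assumes "local_derivation \<Delta>"
    and "\<Delta> (Lb 0) = sv_zero"
    and "\<Delta> (Lb 1) = sv_zero"
  shows "\<forall>m. \<Delta> (Lb m) = sv_zero"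
proof
  fix m
  have lin: "sv_linear \<Delta>" and local: "\<And>x. x \<in> SV \<Longrightarrow> \<exists>D. derivation D \<and> \<Delta> x = D x"
    using assms(1) unfolding local_derivation_def by blast+
  have "\<Delta> (double_root_element m z) = \<Delta> (Lb m)" for z
    unfolding sv_linear_double_root_element[OF lin] assms(2,3)
    by (simp add: sv_add_def sv_smul_def sv_zero_def)
  then have vanish: "laurent (fst (\<Delta> (Lb m))) z = 0" "laurent (snd (\<Delta> (Lb m))) z = 0"
    if "z \<noteq> 0" for z
    using local[OF double_root_element_in_SV] derivation_double_root_element[OF _ that] by metis+
  have "\<Delta> (Lb m) \<in> SV" using lin Lb_in_SV unfolding sv_linear_def by blast
  then have "fin_supp (fst (\<Delta> (Lb m)))" "fin_supp (snd (\<Delta> (Lb m)))"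
    by (simp_all add: SV_def)
  with vanish show "\<Delta> (Lb m) = sv_zero"
    by (simp add: sv_zero_def prod_eq_iff fun_eq_iff laurent_eq_0_imp_zero)
qed

end
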